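(* Let $\mathcal G$ be a Lie superalgebra over a field of characteristic zero and let $\mathcal S\subseteq\mathcal U_{1-}$ be the space of symmetric operators on $\mathcal U_1=\mathcal G$ described below. If $A,B\in\mathcal S$, then $[A,B]\in\mathcal S$, where $[\cdot,\cdot]$ is the extended bracket described below.
   Context: Set $\mathcal U_1=\mathcal G$ with its $\mathbb Z_2$-grading. For $p\ge1$ define recursively $\mathcal U_{-p+1}=\mathrm{Hom}(\mathcal U_1,\mathcal U_{-p+2})$, $\mathbb Z_2$-graded by declaring $A$ even (resp. odd) if it preserves (resp. reverses) parity; $|u|$ is the parity of a homogeneous element, and sign formulas are for homogeneous elements extended bilinearly. Elements of $\mathcal U_{1-p}$ are operators of order $p$ (elements of $\mathcal G$ have order $0$), and an operator $A$ of order $p\ge1$ is identified with the $p$-linear map $A(x_1,\dots,x_p)=A(x_1)(x_2)\cdots(x_p)$; $\mathcal U_{1-}=\bigoplus_{p\ge0}\mathcal U_{1-p}$. An operator of order $p\ge2$ is symmetric if it is graded symmetric: $A(\dots,x_i,x_{i+1},\dots)=(-1)^{|x_i||x_{i+1}|}A(\dots,x_{i+1},x_i,\dots)$ for all homogeneous arguments and all $i$; all operators of order $0$ or $1$ are symmetric; $\mathcal S=\bigoplus_{p\ge0}\mathcal S_{1-p}$ where $\mathcal S_{1-p}$ is the space of symmetric operators of order $p$. Define $\circ$: $A\circ y=A(y)$, $y\circ A=0$ for $A$ of order $\ge1$ and $y\in\mathcal U_1$; for $A,B$ of orders $\ge1$, recursively $(A\circ B)(x)=A\circ B(x)+(-1)^{|B||x|}A(x)\circ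 B$. Define $\bullet$: $A_p\bullet B_q=\frac{p!q!}{(p+q-1)!}A_p\circ B_q$ for orders $p,q\ge1$; $A_p\bullet x=pA_p(x)$, $x\bullet A_p=0$, $x\bullet y=0$ for $x,y\in\mathcal U_1$. The bracket of $\mathcal G$ is extended to $\mathcal U_{1-}$: on $\mathcal G$ it is the given bracket, and for operators $A,B$ of orders $p,q$ with $p+q\ge1$, $[A,B]$ is the operator of order $p+q$ defined recursively by $[A,B]\bullet x=[A,B\bullet x]+(-1)^{|x||B|}[A\bullet x,B]$ for all $x\in\mathcal G$. *)

theory Defs
  imports Main "HOL.Vector_Spaces"
begin

text \<open>Parities are booleans: False = even, True = odd.
  The Z2-grading of G is given by two subspaces G0 (even) and G1 (odd).\<close>

definition Gp :: "'g set \<Rightarrow> 'g set \<Rightarrow> bool \<Rightarrow> 'g set" where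
  "Gp G0 G1 e = (if e then G1 else G0)"

text \<open>sign (-1)^(|x||y|) acting on a vector\<close>
definition sg :: "bool \<Rightarrow> bool \<Rightarrow> 'g::ab_group_add \<Rightarrow> 'g" where
  "sg a b v = (if a \<and> b then - v else v)"

definition lie_superalgebra ::
  "('k::field_char_0 \<Rightarrow> 'g::ab_group_add \<Rightarrow> 'g) \<Rightarrow> 'g set \<Rightarrow> 'g set \<Rightarrow> ('g \<Rightarrow> 'g \<Rightarrow> 'g) \<Rightarrow> bool" where
  "lie_superalgebra scale G0 G1 br \<longleftrightarrow>
     vector_space scale \<and>
     module.subspace scale G0 \<and> module.subspace scale G1 \<and>
     (\<forall>x. \<exists>a\<in>G0. \<exists>b\<in>G1. x = a + b) \<and> G0 \<inter> G1 = {0} \<and>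
     (\<forall>x y z. br (x + y) z = br x z + br y z) \<and>
     (\<forall>x y z. br x (y + z) = br x y + br x z) \<and>
     (\<forall>c x y. br (scale c x) y = scale c (br x y)) \<and>
     (\<forall>c x y. br x (scale c y) = scale c (br x y)) \<and>
     (\<forall>a b x y. x \<in> Gp G0 G1 a \<longrightarrow> y \<in> Gp G0 G1 b \<longrightarrow> br x y \<in> Gp G0 G1 (a \<noteq> b)) \<and>
     (\<forall>a b x y. x \<in> Gp G0 G1 a \<longrightarrow> y \<in> Gp G0 G1 b \<longrightarrow> br x y = - sg a b (br y x)) \<and>
     (\<forall>a b c x y z. x \<in> Gp G0 G1 a \<longrightarrow> y \<in> Gp G0 G1 b \<longrightarrow> z \<in> Gp G0 G1 c \<longrightarrow>
        br x (br y z) = br (br x y) z + sg a b (br y (br x z)))"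

definition proj :: "'g set \<Rightarrow> 'g set \<Rightarrow> bool \<Rightarrow> 'g::ab_group_add \<Rightarrow> 'g" where
  "proj G0 G1 e x = (THE y. y \<in> Gp G0 G1 e \<and> x - y \<in> Gp G0 G1 (\<not> e))"

definition homog :: "'g set \<Rightarrow> 'g set \<Rightarrow> 'g \<Rightarrow> bool" where
  "homog G0 G1 x \<longleftrightarrow> x \<in> G0 \<union> G1"

text \<open>An operator of order p is represented by the p-linear map
  A(x1,...,xp) = A(x1)(x2)...(xp), i.e. a function on argument lists of length p
  (values on lists of other lengths are irrelevant).  An operator of order 0
  is the element A [] of G.  A(x) is (\<lambda>ys. A (x # ys)).\<close>

definition multilin :: "('k::field \<Rightarrow> 'g::ab_group_add \<Rightarrow> 'g) \<Rightarrow> nat \<Rightarrow> ('g list \<Rightarrow> 'g) \<Rightarrow> bool" where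
  "multilin scale p A \<longleftrightarrow>
     (\<forall>pre post x y. length pre + length post + 1 = p \<longrightarrow>
        A (pre @ (x + y) # post) = A (pre @ x # post) + A (pre @ y # post)) \<and>
     (\<forall>pre post c x. length pre + length post + 1 = p \<longrightarrow>
        A (pre @ scale c x # post) = scale c (A (pre @ x # post)))"

definition symmetric_op :: "'g set \<Rightarrow> 'g set \<Rightarrow> nat \<Rightarrow> ('g::ab_group_add list \<Rightarrow> 'g) \<Rightarrow> bool" where
  "symmetric_op G0 G1 p A \<longleftrightarrow>
     (p \<ge> 2 \<longrightarrow>
       (\<forall>pre post a b x y. length pre + length post + 2 = p \<longrightarrow>
          (\<forall>z \<in> set pre \<union> set post. homog G0 G1 z) \<longrightarrow>
          x \<in> Gp G0 G1 a \<longrightarrow> y \<in> Gp G0 G1 b \<longrightarrow>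
          A (pre @ x # y # post) = sg a b (A (pre @ y # x # post))))"

text \<open>Parity-c component of an operator (on homogeneous arguments of total parity s
  an operator of parity c takes values of parity s + c); every multilinear operator is
  the sum of its even and odd components.\<close>
definition opar :: "'g set \<Rightarrow> 'g set \<Rightarrow> bool \<Rightarrow> ('g::ab_group_add list \<Rightarrow> 'g) \<Rightarrow> 'g list \<Rightarrow> 'g" where
  "opar G0 G1 c A xs =
     (\<Sum>es \<in> {es. length es = length xs}.
        proj G0 G1 (c \<noteq> odd (length (filter id es))) (A (map2 (proj G0 G1) es xs)))"

text \<open>The extended bracket of an operator A of order p and B of order q, defined by the
  recursion  [A,B]\<bullet>x = [A,B\<bullet>x] + (-1)^(|x||B|) [A\<bullet>x,B]  where [A,B]\<bullet>x = (p+q)[A,B](x),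
  B\<bullet>x = q B(x) (= 0 if q = 0), A\<bullet>x = p A(x) (= 0 if p = 0); the sign is handled by
  decomposing x and B into homogeneous components (bilinear extension).\<close>
fun brk :: "('k::field_char_0 \<Rightarrow> 'g::ab_group_add \<Rightarrow> 'g) \<Rightarrow> 'g set \<Rightarrow> 'g set \<Rightarrow> ('g \<Rightarrow> 'g \<Rightarrow> 'g) \<Rightarrow>
             nat \<Rightarrow> ('g list \<Rightarrow> 'g) \<Rightarrow> nat \<Rightarrow> ('g list \<Rightarrow> 'g) \<Rightarrow> 'g list \<Rightarrow> 'g" where
  "brk scale G0 G1 br p A q B xs =
     (if p + q = 0 then br (A []) (B [])
      else (case xs of [] \<Rightarrow> 0
            | x # ys \<Rightarrow> scale (inverse (of_nat (p + q)))
                ((if q = 0 then 0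
                  else brk scale G0 G1 br p A (q - 1) (\<lambda>zs. scale (of_nat q) (B (x # zs))) ys)
                 + (if p = 0 then 0
                    else (\<Sum>e\<in>UNIV. \<Sum>c\<in>UNIV.
                      sg e c (brk scale G0 G1 br (p - 1)
                                (\<lambda>zs. scale (of_nat p) (A (proj G0 G1 e x # zs)))
                                q (opar G0 G1 c B) ys))))))"

text \<open>Elements of U_{1-} = \<Oplus>_p U_{1-p}: A p is the component of order p; finitely many
  components are nonzero.\<close>
definition in_U :: "('k::field \<Rightarrow> 'g::ab_group_add \<Rightarrow> 'g) \<Rightarrow> (nat \<Rightarrow> 'g list \<Rightarrow> 'g) \<Rightarrow> bool" where
  "in_U scale A \<longleftrightarrow> (\<forall>p. multilin scale p (A p)) \<and>
     finite {p. \<exists>xs. length xs = p \<and> A p xs \<noteq> 0}"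

definition in_S :: "('k::field \<Rightarrow> 'g::ab_group_add \<Rightarrow> 'g) \<Rightarrow> 'g set \<Rightarrow> 'g set \<Rightarrow> (nat \<Rightarrow> 'g list \<Rightarrow> 'g) \<Rightarrow> bool" where
  "in_S scale G0 G1 A \<longleftrightarrow> in_U scale A \<and> (\<forall>p. symmetric_op G0 G1 p (A p))"

definition ext_br :: "('k::field_char_0 \<Rightarrow> 'g::ab_group_add \<Rightarrow> 'g) \<Rightarrow> 'g set \<Rightarrow> 'g set \<Rightarrow> ('g \<Rightarrow> 'g \<Rightarrow> 'g) \<Rightarrow>
      (nat \<Rightarrow> 'g list \<Rightarrow> 'g) \<Rightarrow> (nat \<Rightarrow> 'g list \<Rightarrow> 'g) \<Rightarrow> nat \<Rightarrow> 'g list \<Rightarrow> 'g" where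
  "ext_br scale G0 G1 br A B n xs = (\<Sum>p\<le>n. brk scale G0 G1 br p (A p) (n - p) (B (n - p)) xs)"

end

theory Submission
  imports Defs
begin

text \<open>Graded symmetry of \<open>[A,B]\<close> in two adjacent arguments is proved by induction on their
  position. Arguments in front of them are absorbed by the defining recursion, whose operands
  \<open>A \<bullet> w\<close>, \<open>B \<bullet> w\<close> and the parity components of \<open>B\<close> are again multilinear and graded symmetric.
  For the first two arguments \<open>x, y\<close>, unfolding the recursion twice yields four terms: \<open>x\<close> and \<open>y\<close>
  both fed to \<open>B\<close>, both fed to \<open>A\<close>, or one to each. The first two are graded symmetric by the
  symmetry of \<open>B\<close> resp. \<open>A\<close>, and swapping \<open>x\<close> and \<open>y\<close> exchanges the two mixed terms with the
  sign \<open>(-1)^(|x||y|)\<close>.\<close>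

declare brk.simps[simp del]

lemma sg_add: "sg a b (u + v) = sg a b u + sg a b v"
  by (simp add: sg_def)

lemma sg_zero [simp]: "sg a b 0 = 0"
  by (simp add: sg_def)

lemma sg_sum: "sg a b (sum f S) = (\<Sum>x\<in>S. sg a b (f x))"
  by (auto simp: sg_def sum_negf)

lemma sg_commute: "sg a b (sg c d v) = sg c d (sg a b v)"
  by (auto simp: sg_def)

lemma sg_swap: "sg a b v = sg b a v"
  by (simp add: sg_def conj_commute)

lemma sg_sg [simp]: "sg a b (sg a b v) = v"
  by (simp add: sg_def)

lemma map2_append_Cons:
  "length es = length pre + 1 + length post \<Longrightarrow>
     map2 f es (pre @ z # post) =
       map2 f (take (length pre) es) pre @ f (es ! length pre) z # map2 f (drop (Suc (length pre)) es) post"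
proof (induction pre arbitrary: es)
  case Nil
  then show ?case by (cases es) auto
next
  case (Cons a pre)
  then show ?case by (cases es) auto
qed

lemma finite_support_iff_eventually_vanishing:
  "finite {p. \<exists>xs. length xs = p \<and> A p xs \<noteq> 0} \<longleftrightarrow> (\<exists>M. \<forall>p xs. M < p \<longrightarrow> length xs = p \<longrightarrow> A p xs = 0)"
  unfolding finite_nat_set_iff_bounded_le by (auto simp: not_less[symmetric])

section \<open>Graded vector spaces\<close>

locale graded_space = vector_space scale
  for scale :: "'k::field_char_0 \<Rightarrow> 'g::ab_group_add \<Rightarrow> 'g" (infixr \<open>*s\<close> 75) +
  fixes G0 G1 :: "'g set"
  assumes subspace_G0: "subspace G0" and subspace_G1: "subspace G1"
    and graded_decomp: "\<exists>a\<in>G0. \<exists>b\<in>G1. x = a + b"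
    and G0_inter_G1: "G0 \<inter> G1 = {0}"
begin

abbreviation Homog :: "'g set" where "Homog \<equiv> G0 \<union> G1"

abbreviation proj' :: "bool \<Rightarrow> 'g \<Rightarrow> 'g" where "proj' \<equiv> proj G0 G1"

abbreviation opar' :: "bool \<Rightarrow> ('g list \<Rightarrow> 'g) \<Rightarrow> 'g list \<Rightarrow> 'g" where
  "opar' \<equiv> opar G0 G1"

abbreviation multilin' :: "nat \<Rightarrow> ('g list \<Rightarrow> 'g) \<Rightarrow> bool" where
  "multilin' \<equiv> multilin scale"

lemma subspace_Gp: "subspace (Gp G0 G1 e)"
  using subspace_G0 subspace_G1 by (simp add: Gp_def)

lemma Gp_subset_Homog: "Gp G0 G1 e \<subseteq> Homog"
  by (auto simp: Gp_def)

lemma Gp_inter_eq_0: "u \<in> Gp G0 G1 e \<Longrightarrow> u \<in> Gp G0 G1 (\<not> e) \<Longrightarrow> u = 0"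
  using G0_inter_G1 by (cases e) (auto simp: Gp_def)

lemma ex1_graded_component: "\<exists>!y. y \<in> Gp G0 G1 e \<and> x - y \<in> Gp G0 G1 (\<not> e)"
proof -
  obtain a b where "a \<in> G0" "b \<in> G1" "x = a + b"
    using graded_decomp by blast
  then have "\<exists>y. y \<in> Gp G0 G1 e \<and> x - y \<in> Gp G0 G1 (\<not> e)"
    by (cases e) (force simp: Gp_def)+
  moreover have "y = y'"
    if "y \<in> Gp G0 G1 e" "x - y \<in> Gp G0 G1 (\<not> e)" "y' \<in> Gp G0 G1 e" "x - y' \<in> Gp G0 G1 (\<not> e)"
    for y y'
  proof -
    have "y - y' \<in> Gp G0 G1 e"
      using that subspace_Gp subspace_diff by blast
    moreover have "y - y' = (x - y') - (x - y)"
      by simp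
    then have "y - y' \<in> Gp G0 G1 (\<not> e)"
      using that subspace_Gp subspace_diff by metis
    ultimately show ?thesis
      using Gp_inter_eq_0 by fastforce
  qed
  ultimately show ?thesis
    by blast
qed

lemma proj_in_Gp: "proj' e x \<in> Gp G0 G1 e"
  and diff_proj_in_Gp: "x - proj' e x \<in> Gp G0 G1 (\<not> e)"
  using theI'[OF ex1_graded_component] unfolding proj_def by blast+

lemma proj_eqI: "y \<in> Gp G0 G1 e \<Longrightarrow> x - y \<in> Gp G0 G1 (\<not> e) \<Longrightarrow> proj' e x = y"
  using ex1_graded_component proj_in_Gp diff_proj_in_Gp by blast

lemma proj_in_Homog: "proj' e x \<in> Homog"
  using proj_in_Gp Gp_subset_Homog by blast

lemma proj_add: "proj' e (x + y) = proj' e x + proj' e y"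
proof (rule proj_eqI)
  show "proj' e x + proj' e y \<in> Gp G0 G1 e"
    using proj_in_Gp subspace_Gp subspace_add by blast
  have "x + y - (proj' e x + proj' e y) = (x - proj' e x) + (y - proj' e y)"
    by simp
  then show "x + y - (proj' e x + proj' e y) \<in> Gp G0 G1 (\<not> e)"
    using diff_proj_in_Gp subspace_Gp subspace_add by metis
qed

lemma proj_scale: "proj' e (c *s x) = c *s proj' e x"
proof (rule proj_eqI)
  show "c *s proj' e x \<in> Gp G0 G1 e"
    using proj_in_Gp subspace_Gp subspace_scale by blast
  have "c *s x - c *s proj' e x = c *s (x - proj' e x)"
    by (simp add: scale_right_diff_distrib)
  then show "c *s x - c *s proj' e x \<in> Gp G0 G1 (\<not> e)"
    using diff_proj_in_Gp subspace_Gp subspace_scale by metis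
qed

lemma proj_zero [simp]: "proj' e 0 = 0"
  using proj_scale[of e 0 0] by simp

lemma proj_sg: "proj' e (sg a b v) = sg a b (proj' e v)"
  using proj_scale[of e "-1" v] by (simp add: sg_def)

lemma proj_of_Gp: "x \<in> Gp G0 G1 e \<Longrightarrow> proj' e x = x"
  by (rule proj_eqI) (auto intro: subspace_0[OF subspace_Gp])

lemma proj_of_Gp_other: "x \<in> Gp G0 G1 (\<not> e) \<Longrightarrow> proj' e x = 0"
  by (rule proj_eqI) (auto intro: subspace_0[OF subspace_Gp])

lemma proj_proj: "proj' d (proj' c v) = (if d = c then proj' c v else 0)"
  using proj_of_Gp[OF proj_in_Gp] proj_of_Gp_other[of "proj' c v" d] proj_in_Gp[of c v]
  by (cases "d = c") auto

lemma sg_scale: "sg a b (c *s v) = c *s sg a b v"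
  by (simp add: sg_def)

text \<open>On \<open>Homog\<close> this is the parity; \<open>0\<close> counts as even.\<close>
definition par :: "'g \<Rightarrow> bool" where
  "par x \<longleftrightarrow> x \<notin> G0"

lemma Homog_in_Gp_par: "x \<in> Homog \<Longrightarrow> x \<in> Gp G0 G1 (par x)"
  by (auto simp: par_def Gp_def)

lemma proj_par: "x \<in> Homog \<Longrightarrow> proj' (par x) x = x"
  by (rule proj_of_Gp[OF Homog_in_Gp_par])

lemma proj_not_par: "x \<in> Homog \<Longrightarrow> proj' (\<not> par x) x = 0"
  by (rule proj_of_Gp_other) (simp add: Homog_in_Gp_par)

lemma par_eqI: "x \<in> Gp G0 G1 a \<Longrightarrow> x \<noteq> 0 \<Longrightarrow> par x = a"
  using G0_inter_G1 by (cases a) (auto simp: par_def Gp_def)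

section \<open>Multilinear operators and their parity components\<close>

lemma multilinD_add:
  "multilin' k F \<Longrightarrow> length pre + length post + 1 = k \<Longrightarrow>
     F (pre @ (x + y) # post) = F (pre @ x # post) + F (pre @ y # post)"
  unfolding multilin_def by blast

lemma multilinD_scale:
  "multilin' k F \<Longrightarrow> length pre + length post + 1 = k \<Longrightarrow>
     F (pre @ c *s x # post) = c *s F (pre @ x # post)"
  unfolding multilin_def by blast

lemma multilin_zero_arg:
  "multilin' k F \<Longrightarrow> length pre + length post + 1 = k \<Longrightarrow> F (pre @ 0 # post) = 0"
  using multilinD_scale[of k F pre post 0 0] by simp

lemma multilin_sum:
  assumes "\<And>i. i \<in> S \<Longrightarrow> multilin' k (F i)"
  shows "multilin' k (\<lambda>xs. \<Sum>i\<in>S. F i xs)"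
  using multilinD_add[OF assms] multilinD_scale[OF assms]
  by (simp add: multilin_def sum.distrib scale_sum_right)

lemma multilin_ConsI:
  assumes "\<And>x y ys. length ys = n \<Longrightarrow> F ((x + y) # ys) = F (x # ys) + F (y # ys)"
    and "\<And>c x ys. length ys = n \<Longrightarrow> F (c *s x # ys) = c *s F (x # ys)"
    and "\<And>w. multilin' n (\<lambda>ys. F (w # ys))"
  shows "multilin' (Suc n) F"
  unfolding multilin_def
proof (intro conjI allI impI)
  fix pre post :: "'g list" and x y c
  assume len: "length pre + length post + 1 = Suc n"
  show "F (pre @ (x + y) # post) = F (pre @ x # post) + F (pre @ y # post)"
    using len assms(1) multilinD_add[OF assms(3)] by (cases pre) auto
  show "F (pre @ c *s x # post) = c *s F (pre @ x # post)"
    using len assms(2) multilinD_scale[OF assms(3)] by (cases pre) auto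
qed

definition bullet :: "nat \<Rightarrow> ('g list \<Rightarrow> 'g) \<Rightarrow> 'g \<Rightarrow> 'g list \<Rightarrow> 'g" where
  "bullet k F x zs = of_nat k *s F (x # zs)"

lemma multilin_bullet:
  assumes "multilin' k F"
  shows "multilin' (k - 1) (bullet m F x)"
  unfolding multilin_def
proof (intro conjI allI impI)
  fix pre post :: "'g list" and y z c
  assume "length pre + length post + 1 = k - 1"
  then have len: "length (x # pre) + length post + 1 = k"
    by simp
  show "bullet m F x (pre @ (y + z) # post) = bullet m F x (pre @ y # post) + bullet m F x (pre @ z # post)"
    using multilinD_add[OF assms len] by (simp add: bullet_def scale_right_distrib)
  show "bullet m F x (pre @ c *s y # post) = c *s bullet m F x (pre @ y # post)"
    using multilinD_scale[OF assms len] by (simp add: bullet_def scale_left_commute)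
qed

lemma bullet_add_op: "bullet m (\<lambda>zs. F zs + G zs) x = (\<lambda>zs. bullet m F x zs + bullet m G x zs)"
  by (simp add: fun_eq_iff bullet_def scale_right_distrib)

lemma bullet_scale_op: "bullet m (\<lambda>zs. c *s F zs) x = (\<lambda>zs. c *s bullet m F x zs)"
  by (simp add: fun_eq_iff bullet_def scale_left_commute)

lemma bullet_add:
  "multilin' k F \<Longrightarrow> k \<noteq> 0 \<Longrightarrow> length zs = k - 1 \<Longrightarrow>
     bullet m F (x + y) zs = bullet m F x zs + bullet m F y zs"
  using multilinD_add[of k F "[]" zs x y] by (simp add: bullet_def scale_right_distrib)

lemma bullet_scale:
  "multilin' k F \<Longrightarrow> k \<noteq> 0 \<Longrightarrow> length zs = k - 1 \<Longrightarrow>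
     bullet m F (c *s x) zs = c *s bullet m F x zs"
  using multilinD_scale[of k F "[]" zs c x] by (simp add: bullet_def scale_left_commute)

lemma multilin_opar:
  assumes B: "multilin' k B"
  shows "multilin' k (opar' c B)"
proof -
  have lin: "B (map2 proj' es (pre @ (x + y) # post)) =
               B (map2 proj' es (pre @ x # post)) + B (map2 proj' es (pre @ y # post))"
    "B (map2 proj' es (pre @ d *s x # post)) = d *s B (map2 proj' es (pre @ x # post))"
    if "length pre + length post + 1 = k" "length es = length pre + 1 + length post"
    for es pre post x y d
    using that multilinD_add[OF B] multilinD_scale[OF B]
    by (simp_all add: map2_append_Cons proj_add proj_scale)
  show ?thesis
    by (simp add: multilin_def opar_def lin proj_add proj_scale sum.distrib scale_sum_right)
qed

lemma opar_add: "opar' c (\<lambda>zs. B1 zs + B2 zs) = (\<lambda>zs. opar' c B1 zs + opar' c B2 zs)"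
  by (simp add: fun_eq_iff opar_def proj_add sum.distrib)

lemma opar_scale: "opar' c (\<lambda>zs. k *s B zs) = (\<lambda>zs. k *s opar' c B zs)"
  by (simp add: fun_eq_iff opar_def proj_scale scale_sum_right)

lemma opar_cong:
  assumes "Homog \<subseteq> S" "length xs = k" "\<And>zs. length zs = k \<Longrightarrow> set zs \<subseteq> S \<Longrightarrow> B zs = B' zs"
  shows "opar' c B xs = opar' c B' xs"
proof -
  have "set (map2 proj' es xs) \<subseteq> S" for es
    using proj_in_Homog assms(1) by (auto dest: set_zip_rightD)
  then show ?thesis
    unfolding opar_def using assms(2,3) by (intro sum.cong) auto
qed

text \<open>On homogeneous arguments only the term of \<open>opar\<close> with \<open>es = map par w\<close> survives: any other
  choice of parities projects some argument to 0.\<close>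
lemma opar_Homog:
  assumes B: "multilin' k B" and w: "set w \<subseteq> Homog" "length w = k"
  shows "opar' c B w = proj' (c \<noteq> odd (length (filter id (map par w)))) (B w)"
proof -
  let ?f = "\<lambda>es. proj' (c \<noteq> odd (length (filter id es))) (B (map2 proj' es w))"
  have "?f es = 0" if es: "length es = length w" "es \<noteq> map par w" for es
  proof -
    obtain i where i: "i < length w" "es ! i \<noteq> par (w ! i)"
      using es nth_equalityI[of es "map par w"] by auto
    let ?L = "map2 proj' es w"
    have "?L ! i = 0"
      using i es(1) w(1) proj_not_par[of "w ! i"] by (auto simp: nth_mem subset_iff)
    then have "?L = take i ?L @ 0 # drop (Suc i) ?L"
      using id_take_nth_drop[of i ?L] i es(1) by simp
    moreover have "B (take i ?L @ 0 # drop (Suc i) ?L) = 0"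
      using multilin_zero_arg[OF B] i es(1) w(2) by simp
    ultimately show ?thesis
      by simp
  qed
  moreover have "finite {es :: bool list. length es = length w}"
    using finite_lists_length_eq[of "UNIV :: bool set"] by simp
  ultimately have "(\<Sum>es\<in>{es. length es = length w}. ?f es) = ?f (map par w)"
    by (subst sum.mono_neutral_right[where S = "{map par w}"]) auto
  moreover have "map2 proj' (map par w) w = w"
    using w(1) by (induction w) (auto simp: proj_par)
  ultimately show ?thesis
    by (simp add: opar_def o_def)
qed

lemma opar_opar_Homog:
  "multilin' k B \<Longrightarrow> set w \<subseteq> Homog \<Longrightarrow> length w = k \<Longrightarrow>
     opar' d (opar' c B) w = (if d = c then opar' c B w else 0)"
  using opar_Homog[OF multilin_opar, of k B w d c] opar_Homog[of k B w c]
  by (auto simp: proj_proj)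

lemma opar_bullet_Homog:
  assumes B: "multilin' k B" "k \<noteq> 0" and x: "x \<in> Homog" and w: "set w \<subseteq> Homog" "length w = k - 1"
  shows "opar' d (bullet m B x) w = bullet m (opar' (d \<noteq> par x) B) x w"
  using opar_Homog[OF multilin_bullet[OF B(1), of m x] w, of d]
    opar_Homog[OF B(1), of "x # w" "d \<noteq> par x"] B(2) x w
  by (cases "par x") (simp_all add: bullet_def proj_scale)

definition graded_symmetric :: "nat \<Rightarrow> ('g list \<Rightarrow> 'g) \<Rightarrow> bool" where
  "graded_symmetric k F \<longleftrightarrow>
     (\<forall>pre post x y. set pre \<subseteq> Homog \<longrightarrow> set post \<subseteq> Homog \<longrightarrow> x \<in> Homog \<longrightarrow> y \<in> Homog \<longrightarrow>
        length pre + length post + 2 = k \<longrightarrow>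
        F (pre @ x # y # post) = sg (par x) (par y) (F (pre @ y # x # post)))"

lemma graded_symmetricD:
  "graded_symmetric k F \<Longrightarrow> set pre \<subseteq> Homog \<Longrightarrow> set post \<subseteq> Homog \<Longrightarrow> x \<in> Homog \<Longrightarrow> y \<in> Homog \<Longrightarrow>
     length pre + length post + 2 = k \<Longrightarrow>
     F (pre @ x # y # post) = sg (par x) (par y) (F (pre @ y # x # post))"
  unfolding graded_symmetric_def by blast

lemma graded_symmetric_bullet:
  assumes "graded_symmetric k F" "x \<in> Homog"
  shows "graded_symmetric (k - 1) (bullet m F x)"
  unfolding graded_symmetric_def
proof (intro allI impI)
  fix pre post y z
  assume "set pre \<subseteq> Homog" "set post \<subseteq> Homog" "y \<in> Homog" "z \<in> Homog"
    "length pre + length post + 2 = k - 1"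
  then show "bullet m F x (pre @ y # z # post) = sg (par y) (par z) (bullet m F x (pre @ z # y # post))"
    using graded_symmetricD[OF assms(1), of "x # pre" post y z] assms(2)
    by (simp add: bullet_def sg_scale)
qed

lemma graded_symmetric_opar:
  assumes B: "multilin' k B" "graded_symmetric k B"
  shows "graded_symmetric k (opar' c B)"
  unfolding graded_symmetric_def
proof (intro allI impI)
  fix pre post x y
  assume h: "set pre \<subseteq> Homog" "set post \<subseteq> Homog" "x \<in> Homog" "y \<in> Homog"
    "length pre + length post + 2 = k"
  then show "opar' c B (pre @ x # y # post) = sg (par x) (par y) (opar' c B (pre @ y # x # post))"
    using opar_Homog[OF B(1), of "pre @ x # y # post" c] opar_Homog[OF B(1), of "pre @ y # x # post" c]
      graded_symmetricD[OF B(2) h]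
    by (simp add: proj_sg)
qed

lemma graded_symmetric_sum:
  assumes "\<And>i. i \<in> S \<Longrightarrow> graded_symmetric k (F i)"
  shows "graded_symmetric k (\<lambda>xs. \<Sum>i\<in>S. F i xs)"
  unfolding graded_symmetric_def
proof (intro allI impI)
  fix pre post x y
  assume "set pre \<subseteq> Homog" "set post \<subseteq> Homog" "x \<in> Homog" "y \<in> Homog"
    "length pre + length post + 2 = k"
  then have "F i (pre @ x # y # post) = sg (par x) (par y) (F i (pre @ y # x # post))" if "i \<in> S" for i
    using graded_symmetricD[OF assms[OF that]] by blast
  then show "(\<Sum>i\<in>S. F i (pre @ x # y # post)) = sg (par x) (par y) (\<Sum>i\<in>S. F i (pre @ y # x # post))"
    by (simp add: sg_sum)
qed

lemma graded_symmetric_if_symmetric_op: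
  "symmetric_op G0 G1 k F \<Longrightarrow> graded_symmetric k F"
  unfolding graded_symmetric_def
proof (intro allI impI)
  fix pre post x y
  assume sym: "symmetric_op G0 G1 k F" and pre_post: "set pre \<subseteq> Homog" "set post \<subseteq> Homog"
    and "x \<in> Homog" "y \<in> Homog" and len: "length pre + length post + 2 = k"
  then have "x \<in> Gp G0 G1 (par x)" "y \<in> Gp G0 G1 (par y)"
    using Homog_in_Gp_par by blast+
  moreover have "2 \<le> k" "\<forall>z\<in>set pre \<union> set post. homog G0 G1 z"
    using len pre_post by (auto simp: homog_def)
  ultimately show "F (pre @ x # y # post) = sg (par x) (par y) (F (pre @ y # x # post))"
    using sym len unfolding symmetric_op_def by blast
qed

lemma symmetric_op_if_graded_symmetric:
  assumes F: "multilin' k F" "graded_symmetric k F"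
  shows "symmetric_op G0 G1 k F"
  unfolding symmetric_op_def homog_def
proof (intro impI allI)
  fix pre post :: "'g list" and a b x y
  assume len: "length pre + length post + 2 = k" and pre_post: "\<forall>z\<in>set pre \<union> set post. z \<in> Homog"
    and x: "x \<in> Gp G0 G1 a" and y: "y \<in> Gp G0 G1 b"
  show "F (pre @ x # y # post) = sg a b (F (pre @ y # x # post))"
  proof (cases "x = 0 \<or> y = 0")
    case True
    have "F (pre @ 0 # z # post) = 0" "F (pre @ z # 0 # post) = 0" for z
      using multilin_zero_arg[OF F(1), of pre "z # post"] multilin_zero_arg[OF F(1), of "pre @ [z]" post] len
      by simp_all
    with True show ?thesis
      by auto
  next
    case False
    then have "par x = a" "par y = b"
      using x y par_eqI by blast+
    moreover have "x \<in> Homog" "y \<in> Homog" "set pre \<subseteq> Homog" "set post \<subseteq> Homog"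
      using x y Gp_subset_Homog pre_post by auto
    ultimately show ?thesis
      using graded_symmetricD[OF F(2) _ _ _ _ len, of x y] by simp
  qed
qed

end

section \<open>The extended bracket\<close>

locale graded_bilinear = graded_space scale G0 G1
  for scale :: "'k::field_char_0 \<Rightarrow> 'g::ab_group_add \<Rightarrow> 'g" (infixr \<open>*s\<close> 75) and G0 G1 +
  fixes br :: "'g \<Rightarrow> 'g \<Rightarrow> 'g"
  assumes br_add_left: "br (x + y) z = br x z + br y z"
    and br_add_right: "br x (y + z) = br x y + br x z"
    and br_scale_left: "br (c *s x) y = c *s br x y"
    and br_scale_right: "br x (c *s y) = c *s br x y"
begin

abbreviation brk' :: "nat \<Rightarrow> ('g list \<Rightarrow> 'g) \<Rightarrow> nat \<Rightarrow> ('g list \<Rightarrow> 'g) \<Rightarrow> 'g list \<Rightarrow> 'g" where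
  "brk' \<equiv> brk scale G0 G1 br"

lemma brk_0: "p + q = 0 \<Longrightarrow> brk' p A q B xs = br (A []) (B [])"
  by (subst brk.simps) simp

lemma brk_Nil: "p + q \<noteq> 0 \<Longrightarrow> brk' p A q B [] = 0"
  by (subst brk.simps) auto

lemma brk_Cons:
  "p + q \<noteq> 0 \<Longrightarrow> brk' p A q B (x # ys) =
     inverse (of_nat (p + q)) *s
       ((if q = 0 then 0 else brk' p A (q - 1) (bullet q B x) ys) +
        (if p = 0 then 0 else
           \<Sum>e\<in>UNIV. \<Sum>c\<in>UNIV. sg e c (brk' (p - 1) (bullet p A (proj' e x)) q (opar' c B) ys)))"
  by (subst brk.simps) (auto simp: bullet_def[abs_def])

lemma brk_add_left: "brk' p (\<lambda>zs. A1 zs + A2 zs) q B ys = brk' p A1 q B ys + brk' p A2 q B ys"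
proof (induction ys arbitrary: p q A1 A2 B)
  case Nil
  then show ?case
    by (cases "p + q = 0") (simp_all add: brk_0 brk_Nil br_add_left)
next
  case (Cons x ys)
  then show ?case
    by (cases "p + q = 0")
      (simp_all add: brk_0 brk_Cons br_add_left bullet_add_op scale_right_distrib sg_add sum.distrib
        algebra_simps)
qed

lemma brk_scale_left: "brk' p (\<lambda>zs. k *s A zs) q B ys = k *s brk' p A q B ys"
proof (induction ys arbitrary: p q A B)
  case Nil
  then show ?case
    by (cases "p + q = 0") (simp_all add: brk_0 brk_Nil br_scale_left)
next
  case (Cons x ys)
  then show ?case
    by (cases "p + q = 0")
      (simp_all add: brk_0 brk_Cons br_scale_left bullet_scale_op scale_right_distrib sg_scale
        scale_sum_right mult.commute)
qed

lemma brk_add_right: "brk' p A q (\<lambda>zs. B1 zs + B2 zs) ys = brk' p A q B1 ys + brk' p A q B2 ys"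
proof (induction ys arbitrary: p q A B1 B2)
  case Nil
  then show ?case
    by (cases "p + q = 0") (simp_all add: brk_0 brk_Nil br_add_right)
next
  case (Cons x ys)
  then show ?case
    by (cases "p + q = 0")
      (simp_all add: brk_0 brk_Cons br_add_right bullet_add_op opar_add scale_right_distrib sg_add
        sum.distrib algebra_simps)
qed

lemma brk_scale_right: "brk' p A q (\<lambda>zs. k *s B zs) ys = k *s brk' p A q B ys"
proof (induction ys arbitrary: p q A B)
  case Nil
  then show ?case
    by (cases "p + q = 0") (simp_all add: brk_0 brk_Nil br_scale_right)
next
  case (Cons x ys)
  then show ?case
    by (cases "p + q = 0")
      (simp_all add: brk_0 brk_Cons br_scale_right bullet_scale_op opar_scale scale_right_distrib
        sg_scale scale_sum_right mult.commute)
qed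

lemma brk_zero_left: "brk' p (\<lambda>_. 0) q B ys = 0"
  using brk_scale_left[of p 0 "\<lambda>_. 0" q B ys] by simp

lemma brk_zero_right: "brk' p A q (\<lambda>_. 0) ys = 0"
  using brk_scale_right[of p A q 0 "\<lambda>_. 0" ys] by simp

lemma brk_sg_left: "brk' p (\<lambda>zs. sg a b (A zs)) q B ys = sg a b (brk' p A q B ys)"
  using brk_scale_left[of p "-1" A q B ys] by (cases "a \<and> b") (auto simp: sg_def)

lemma brk_sg_right: "brk' p A q (\<lambda>zs. sg a b (B zs)) ys = sg a b (brk' p A q B ys)"
  using brk_scale_right[of p A q "-1" B ys] by (cases "a \<and> b") (auto simp: sg_def)

text \<open>Besides the entries of \<open>ys\<close>, \<^const>\<open>brk\<close> feeds their graded components to \<open>A\<close>;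
  hence \<open>Homog \<subseteq> S\<close>.\<close>
lemma brk_cong:
  assumes "Homog \<subseteq> S" "length ys = p + q" "set ys \<subseteq> S"
    and "\<And>zs. length zs = p \<Longrightarrow> set zs \<subseteq> S \<Longrightarrow> A zs = A' zs"
    and "\<And>zs. length zs = q \<Longrightarrow> set zs \<subseteq> S \<Longrightarrow> B zs = B' zs"
  shows "brk' p A q B ys = brk' p A' q B' ys"
  using assms(2-)
proof (induction ys arbitrary: p q A A' B B')
  case Nil
  then show ?case
    by (simp add: brk_0)
next
  case (Cons x ys)
  have right: "brk' p A (q - 1) (bullet q B x) ys = brk' p A' (q - 1) (bullet q B' x) ys"
    if "q \<noteq> 0"
    using Cons.prems that by (intro Cons.IH) (auto simp: bullet_def)
  have left: "brk' (p - 1) (bullet p A (proj' e x)) q (opar' c B) ys =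
      brk' (p - 1) (bullet p A' (proj' e x)) q (opar' c B') ys"
    if "p \<noteq> 0" for e c
  proof (rule Cons.IH)
    show "opar' c B zs = opar' c B' zs" if "length zs = q" for zs
      using Cons.prems that assms(1) by (intro opar_cong[where S = S]) auto
    show "bullet p A (proj' e x) zs = bullet p A' (proj' e x) zs"
      if "length zs = p - 1" "set zs \<subseteq> S" for zs
      using Cons.prems(3)[of "proj' e x # zs"] that \<open>p \<noteq> 0\<close> proj_in_Homog[of e x] assms(1)
      by (auto simp: bullet_def)
  qed (use Cons.prems that in auto)
  have "p + q \<noteq> 0"
    using Cons.prems(1) by auto
  then show ?case
    using right left by (cases "p = 0"; cases "q = 0") (simp_all add: brk_Cons)
qed

lemma brk_vanishing_left:
  "(\<And>zs. length zs = p \<Longrightarrow> A zs = 0) \<Longrightarrow> length ys = p + q \<Longrightarrow> brk' p A q B ys = 0"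
  using brk_cong[where S = UNIV and A' = "\<lambda>_. 0" and B' = B] by (simp add: brk_zero_left)

lemma brk_vanishing_right:
  "(\<And>zs. length zs = q \<Longrightarrow> B zs = 0) \<Longrightarrow> length ys = p + q \<Longrightarrow> brk' p A q B ys = 0"
  using brk_cong[where S = UNIV and A' = A and B' = "\<lambda>_. 0"] by (simp add: brk_zero_right)

text \<open>The paper's recursion \<open>[A,B] \<bullet> x = [A,B \<bullet> x] + (-1)^(|x||B|) [A \<bullet> x,B]\<close> at homogeneous \<open>x\<close>,
  the sign being split over the parity components \<^const>\<open>opar\<close> of \<open>B\<close>.\<close>
lemma brk_Cons_Homog:
  assumes A: "multilin' p A" and x: "x \<in> Homog" and len: "length ys + 1 = p + q"
  shows "brk' p A q B (x # ys) =
    inverse (of_nat (p + q)) *s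
      ((if q = 0 then 0 else brk' p A (q - 1) (bullet q B x) ys) +
       (if p = 0 then 0 else \<Sum>c\<in>UNIV. sg (par x) c (brk' (p - 1) (bullet p A x) q (opar' c B) ys)))"
proof -
  have "brk' (p - 1) (bullet p A (proj' (\<not> par x) x)) q (opar' c B) ys = 0" if "p \<noteq> 0" for c
    using that len proj_not_par[OF x] multilin_zero_arg[OF A, of "[]"]
    by (intro brk_vanishing_left) (auto simp: bullet_def)
  then have "(\<Sum>e\<in>UNIV. \<Sum>c\<in>UNIV. sg e c (brk' (p - 1) (bullet p A (proj' e x)) q (opar' c B) ys)) =
      (\<Sum>c\<in>UNIV. sg (par x) c (brk' (p - 1) (bullet p A x) q (opar' c B) ys))" if "p \<noteq> 0"
    using that proj_par[OF x] by (cases "par x") (simp_all add: UNIV_bool)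
  moreover have "p + q \<noteq> 0"
    using len by linarith
  ultimately show ?thesis
    by (simp add: brk_Cons)
qed

lemma brk_Cons_add:
  assumes A: "multilin' p A" and B: "multilin' q B" and len: "length ys + 1 = p + q"
  shows "brk' p A q B ((x + y) # ys) = brk' p A q B (x # ys) + brk' p A q B (y # ys)"
proof -
  have right: "brk' p A (q - 1) (bullet q B (x + y)) ys =
      brk' p A (q - 1) (bullet q B x) ys + brk' p A (q - 1) (bullet q B y) ys" if "q \<noteq> 0"
    using brk_cong[where S = UNIV and A' = A and B' = "\<lambda>zs. bullet q B x zs + bullet q B y zs"]
      bullet_add[OF B that] len that
    by (simp add: brk_add_right)
  have left: "brk' (p - 1) (bullet p A (proj' e (x + y))) q C ys =
      brk' (p - 1) (bullet p A (proj' e x)) q C ys + brk' (p - 1) (bullet p A (proj' e y)) q C ys"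
    if "p \<noteq> 0" for e C
    using brk_cong[where S = UNIV and A' = "\<lambda>zs. bullet p A (proj' e x) zs + bullet p A (proj' e y) zs"
        and B' = C]
      bullet_add[OF A that] len that
    by (simp add: brk_add_left proj_add)
  have "p + q \<noteq> 0"
    using len by linarith
  then show ?thesis
    using right left
    by (cases "p = 0"; cases "q = 0") (simp_all add: brk_Cons sg_add sum.distrib scale_right_distrib)
qed

lemma brk_Cons_scale:
  assumes A: "multilin' p A" and B: "multilin' q B" and len: "length ys + 1 = p + q"
  shows "brk' p A q B ((c *s x) # ys) = c *s brk' p A q B (x # ys)"
proof -
  have right: "brk' p A (q - 1) (bullet q B (c *s x)) ys = c *s brk' p A (q - 1) (bullet q B x) ys"
    if "q \<noteq> 0"
    using brk_cong[where S = UNIV and A' = A and B' = "\<lambda>zs. c *s bullet q B x zs"]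
      bullet_scale[OF B that] len that
    by (simp add: brk_scale_right)
  have left: "brk' (p - 1) (bullet p A (proj' e (c *s x))) q C ys =
      c *s brk' (p - 1) (bullet p A (proj' e x)) q C ys"
    if "p \<noteq> 0" for e C
    using brk_cong[where S = UNIV and A' = "\<lambda>zs. c *s bullet p A (proj' e x) zs" and B' = C]
      bullet_scale[OF A that] len that
    by (simp add: brk_scale_left proj_scale)
  have "p + q \<noteq> 0"
    using len by linarith
  then show ?thesis
    using right left
    by (cases "p = 0"; cases "q = 0")
      (simp_all add: brk_Cons sg_scale scale_sum_right scale_right_distrib mult.commute)
qed

lemma multilin_brk:
  assumes "multilin' p A" "multilin' q B"
  shows "multilin' (p + q) (brk' p A q B)"
  using assms
proof (induction "p + q" arbitrary: p q A B)
  case 0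
  then show ?case
    by (simp add: multilin_def)
next
  case (Suc n)
  have right: "multilin' n (brk' p A (q - 1) (bullet q B w))" if "q \<noteq> 0" for w
  proof -
    have "n = p + (q - 1)"
      using Suc.hyps(2) that by linarith
    then show ?thesis
      using Suc.hyps(1) Suc.prems(1) multilin_bullet[OF Suc.prems(2)] by blast
  qed
  have left: "multilin' n (brk' (p - 1) (bullet p A w) q (opar' c B))" if "p \<noteq> 0" for w c
  proof -
    have "n = (p - 1) + q"
      using Suc.hyps(2) that by linarith
    then show ?thesis
      using Suc.hyps(1) multilin_bullet[OF Suc.prems(1)] multilin_opar[OF Suc.prems(2)] by blast
  qed
  have "p + q \<noteq> 0"
    using Suc.hyps(2) by linarith
  then have "multilin' n (\<lambda>ys. brk' p A q B (w # ys))" for w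
    using multilinD_add[OF right] multilinD_add[OF left] multilinD_scale[OF right] multilinD_scale[OF left]
    by (cases "p = 0"; cases "q = 0")
      (simp_all add: multilin_def brk_Cons sg_add sg_scale sum.distrib scale_sum_right
        scale_right_distrib mult.commute)
  then have "multilin' (Suc n) (brk' p A q B)"
    using brk_Cons_add[OF Suc.prems] brk_Cons_scale[OF Suc.prems] Suc.hyps(2)
    by (intro multilin_ConsI) simp_all
  then show ?case
    using Suc.hyps(2) by simp
qed

section \<open>Graded symmetry of the bracket\<close>

text \<open>Unfolding the recursion twice feeds \<open>x\<close> and then \<open>y\<close> to \<open>A\<close> or to \<open>B\<close>; the suffix of each
  name records where \<open>x\<close> and \<open>y\<close> go, in this order.\<close>

definition brk_BB :: "nat \<Rightarrow> ('g list \<Rightarrow> 'g) \<Rightarrow> nat \<Rightarrow> ('g list \<Rightarrow> 'g) \<Rightarrow> 'g \<Rightarrow> 'g \<Rightarrow> 'g list \<Rightarrow> 'g" where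
  "brk_BB p A q B x y zs =
     (if 2 \<le> q then brk' p A (q - 2) (bullet (q - 1) (bullet q B x) y) zs else 0)"

definition brk_BA :: "nat \<Rightarrow> ('g list \<Rightarrow> 'g) \<Rightarrow> nat \<Rightarrow> ('g list \<Rightarrow> 'g) \<Rightarrow> 'g \<Rightarrow> 'g \<Rightarrow> 'g list \<Rightarrow> 'g" where
  "brk_BA p A q B x y zs =
     (if p \<noteq> 0 \<and> q \<noteq> 0 then
        \<Sum>d\<in>UNIV. sg (par y) d (brk' (p - 1) (bullet p A y) (q - 1) (opar' d (bullet q B x)) zs)
      else 0)"

definition brk_AB :: "nat \<Rightarrow> ('g list \<Rightarrow> 'g) \<Rightarrow> nat \<Rightarrow> ('g list \<Rightarrow> 'g) \<Rightarrow> 'g \<Rightarrow> 'g \<Rightarrow> 'g list \<Rightarrow> 'g" where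
  "brk_AB p A q B x y zs =
     (if p \<noteq> 0 \<and> q \<noteq> 0 then
        \<Sum>c\<in>UNIV. sg (par x) c (brk' (p - 1) (bullet p A x) (q - 1) (bullet q (opar' c B) y) zs)
      else 0)"

definition brk_AA :: "nat \<Rightarrow> ('g list \<Rightarrow> 'g) \<Rightarrow> nat \<Rightarrow> ('g list \<Rightarrow> 'g) \<Rightarrow> 'g \<Rightarrow> 'g \<Rightarrow> 'g list \<Rightarrow> 'g" where
  "brk_AA p A q B x y zs =
     (if 2 \<le> p then
        \<Sum>c\<in>UNIV. sg (par x) c (\<Sum>d\<in>UNIV. sg (par y) d
          (brk' (p - 2) (bullet (p - 1) (bullet p A x) y) q (opar' d (opar' c B)) zs))
      else 0)"

lemma brk_Cons_Cons_Homog: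
  assumes A: "multilin' p A" and xy: "x \<in> Homog" "y \<in> Homog" and len: "length zs + 2 = p + q"
  shows "brk' p A q B (x # y # zs) =
    inverse (of_nat (p + q)) *s inverse (of_nat (p + q - 1)) *s
      (brk_BB p A q B x y zs + brk_BA p A q B x y zs + brk_AB p A q B x y zs + brk_AA p A q B x y zs)"
proof -
  have outer: "brk' p A q B (x # y # zs) =
      inverse (of_nat (p + q)) *s
        ((if q = 0 then 0 else brk' p A (q - 1) (bullet q B x) (y # zs)) +
         (if p = 0 then 0 else
            \<Sum>c\<in>UNIV. sg (par x) c (brk' (p - 1) (bullet p A x) q (opar' c B) (y # zs))))"
    using brk_Cons_Homog[OF A xy(1)] len by simp
  have right: "brk' p A (q - 1) (bullet q B x) (y # zs) =
      inverse (of_nat (p + q - 1)) *s (brk_BB p A q B x y zs + brk_BA p A q B x y zs)"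
    if "q \<noteq> 0"
  proof -
    have "p + (q - 1) = p + q - 1" "q - 1 - 1 = q - 2" "2 \<le> q \<longleftrightarrow> q - 1 \<noteq> 0"
      using that by auto
    then show ?thesis
      using brk_Cons_Homog[OF A xy(2), of zs "q - 1" "bullet q B x"] len that
      by (simp add: brk_BB_def brk_BA_def scale_right_distrib)
  qed
  have left: "brk' (p - 1) (bullet p A x) q (opar' c B) (y # zs) =
      inverse (of_nat (p + q - 1)) *s
        ((if q = 0 then 0 else brk' (p - 1) (bullet p A x) (q - 1) (bullet q (opar' c B) y) zs) +
         (if 2 \<le> p then \<Sum>d\<in>UNIV. sg (par y) d
            (brk' (p - 2) (bullet (p - 1) (bullet p A x) y) q (opar' d (opar' c B)) zs) else 0))"
    if "p \<noteq> 0" for c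
  proof -
    have "p - 1 + q = p + q - 1" "p - 1 - 1 = p - 2" "2 \<le> p \<longleftrightarrow> p - 1 \<noteq> 0"
      using that by auto
    then show ?thesis
      using brk_Cons_Homog[OF multilin_bullet[OF A, of p x] xy(2), of zs q "opar' c B"] len that
      by simp
  qed
  show ?thesis
    unfolding outer
    using right left len
    by (cases "p = 0"; cases "q = 0")
      (simp_all add: brk_BB_def brk_BA_def brk_AB_def brk_AA_def UNIV_bool sg_add sg_scale
        scale_right_distrib algebra_simps)
qed

lemma brk_BB_swap:
  assumes B: "graded_symmetric q B" and xy: "x \<in> Homog" "y \<in> Homog"
    and zs: "set zs \<subseteq> Homog" "length zs + 2 = p + q"
  shows "brk_BB p A q B x y zs = sg (par x) (par y) (brk_BB p A q B y x zs)"
proof (cases "2 \<le> q")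
  case True
  have "bullet (q - 1) (bullet q B x) y w = sg (par x) (par y) (bullet (q - 1) (bullet q B y) x w)"
    if "length w = q - 2" "set w \<subseteq> Homog" for w
    using graded_symmetricD[OF B, of "[]" w x y] that xy True by (simp add: bullet_def sg_scale)
  then have "brk' p A (q - 2) (bullet (q - 1) (bullet q B x) y) zs =
      brk' p A (q - 2) (\<lambda>w. sg (par x) (par y) (bullet (q - 1) (bullet q B y) x w)) zs"
    using zs True by (intro brk_cong[where S = Homog]) auto
  then show ?thesis
    by (simp add: brk_BB_def brk_sg_right)
qed (simp add: brk_BB_def)

lemma brk_opar_opar:
  assumes B: "multilin' q B" and zs: "set zs \<subseteq> Homog" "length zs = p + q"
  shows "brk' p A q (opar' d (opar' c B)) zs = (if d = c then brk' p A q (opar' c B) zs else 0)"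
proof -
  have "brk' p A q (opar' d (opar' c B)) zs = brk' p A q (\<lambda>w. if d = c then opar' c B w else 0) zs"
    using zs opar_opar_Homog[OF B] by (intro brk_cong[where S = Homog]) auto
  then show ?thesis
    by (cases "d = c") (simp_all add: brk_zero_right)
qed

lemma brk_AA_swap:
  assumes A: "graded_symmetric p A" and B: "multilin' q B" and xy: "x \<in> Homog" "y \<in> Homog"
    and zs: "set zs \<subseteq> Homog" "length zs + 2 = p + q"
  shows "brk_AA p A q B x y zs = sg (par x) (par y) (brk_AA p A q B y x zs)"
proof (cases "2 \<le> p")
  case True
  have "bullet (p - 1) (bullet p A x) y w = sg (par x) (par y) (bullet (p - 1) (bullet p A y) x w)"
    if "length w = p - 2" "set w \<subseteq> Homog" for w
    using graded_symmetricD[OF A, of "[]" w x y] that xy True by (simp add: bullet_def sg_scale)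
  then have "brk' (p - 2) (bullet (p - 1) (bullet p A x) y) q C zs =
      sg (par x) (par y) (brk' (p - 2) (bullet (p - 1) (bullet p A y) x) q C zs)" for C
    using zs True brk_cong[where S = Homog and A = "bullet (p - 1) (bullet p A x) y"
        and A' = "\<lambda>w. sg (par x) (par y) (bullet (p - 1) (bullet p A y) x w)" and B = C and B' = C]
    by (simp add: brk_sg_left)
  moreover have "length zs = p - 2 + q"
    using zs True by simp
  ultimately have "brk' (p - 2) (bullet (p - 1) (bullet p A x) y) q (opar' d (opar' c B)) zs =
      (if d = c then sg (par x) (par y) (brk' (p - 2) (bullet (p - 1) (bullet p A y) x) q (opar' c B) zs)
       else 0)"
    "brk' (p - 2) (bullet (p - 1) (bullet p A y) x) q (opar' d (opar' c B)) zs =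
      (if d = c then brk' (p - 2) (bullet (p - 1) (bullet p A y) x) q (opar' c B) zs else 0)" for c d
    using brk_opar_opar[OF B zs(1)] by simp_all
  then show ?thesis
    unfolding brk_AA_def using True
    by (simp only: if_True) (cases "par x"; cases "par y"; simp add: UNIV_bool sg_def)
qed (simp add: brk_AA_def)

text \<open>The mixed terms trade places: \<open>|B \<bullet> x| = |B| + |x|\<close> turns the sign \<open>(-1)^(|y||B \<bullet> x|)\<close>
  into \<open>(-1)^(|x||y|) (-1)^(|y||B|)\<close>.\<close>
lemma brk_BA_swap:
  assumes B: "multilin' q B" and xy: "x \<in> Homog" "y \<in> Homog"
    and zs: "set zs \<subseteq> Homog" "length zs + 2 = p + q"
  shows "brk_BA p A q B x y zs = sg (par x) (par y) (brk_AB p A q B y x zs)"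
proof (cases "p \<noteq> 0 \<and> q \<noteq> 0")
  case True
  have "brk' (p - 1) (bullet p A y) (q - 1) (opar' d (bullet q B x)) zs =
      brk' (p - 1) (bullet p A y) (q - 1) (bullet q (opar' (d \<noteq> par x) B) x) zs" for d
    using zs True opar_bullet_Homog[OF B _ xy(1)] by (intro brk_cong[where S = Homog]) auto
  then show ?thesis
    using True
    by (simp add: brk_BA_def brk_AB_def UNIV_bool) (cases "par x"; cases "par y"; simp add: sg_def)
qed (auto simp: brk_BA_def brk_AB_def)

lemma brk_swap_first_two:
  assumes A: "multilin' p A" "graded_symmetric p A" and B: "multilin' q B" "graded_symmetric q B"
    and xy: "x \<in> Homog" "y \<in> Homog" and zs: "set zs \<subseteq> Homog" "length zs + 2 = p + q"
  shows "brk' p A q B (x # y # zs) = sg (par x) (par y) (brk' p A q B (y # x # zs))"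
proof -
  have "brk_AB p A q B x y zs = sg (par x) (par y) (brk_BA p A q B y x zs)"
    using brk_BA_swap[OF B(1) xy(2,1) zs, of A] by (simp add: sg_swap)
  then show ?thesis
    using brk_Cons_Cons_Homog[OF A(1) xy zs(2)] brk_Cons_Cons_Homog[OF A(1) xy(2,1) zs(2)]
      brk_BB_swap[OF B(2) xy zs, of A] brk_AA_swap[OF A(2) B(1) xy zs]
      brk_BA_swap[OF B(1) xy zs, of A]
    by (simp add: sg_add sg_scale algebra_simps)
qed

lemma graded_symmetric_brk:
  assumes "multilin' p A" "graded_symmetric p A" "multilin' q B" "graded_symmetric q B"
  shows "graded_symmetric (p + q) (brk' p A q B)"
  unfolding graded_symmetric_def
proof (intro allI impI)
  fix pre post x y
  assume "set pre \<subseteq> Homog" "set post \<subseteq> Homog" "x \<in> Homog" "y \<in> Homog"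
    "length pre + length post + 2 = p + q"
  then show "brk' p A q B (pre @ x # y # post) = sg (par x) (par y) (brk' p A q B (pre @ y # x # post))"
    using assms
  proof (induction pre arbitrary: p q A B)
    case Nil
    then show ?case
      using brk_swap_first_two[of p A q B x y post] by simp
  next
    case (Cons w pre)
    note A = Cons.prems(6,7) and B = Cons.prems(8,9)
    have w: "w \<in> Homog"
      using Cons.prems(1) by simp
    have len: "length (pre @ x # y # post) + 1 = p + q" "length (pre @ y # x # post) + 1 = p + q"
      using Cons.prems(5) by simp_all
    have right: "brk' p A (q - 1) (bullet q B w) (pre @ x # y # post) =
        sg (par x) (par y) (brk' p A (q - 1) (bullet q B w) (pre @ y # x # post))" if "q \<noteq> 0"
      using Cons.prems A that multilin_bullet[OF B(1)] graded_symmetric_bullet[OF B(2) w]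
      by (intro Cons.IH) auto
    have left: "brk' (p - 1) (bullet p A w) q (opar' c B) (pre @ x # y # post) =
        sg (par x) (par y) (brk' (p - 1) (bullet p A w) q (opar' c B) (pre @ y # x # post))"
      if "p \<noteq> 0" for c
      using Cons.prems that multilin_bullet[OF A(1)] graded_symmetric_bullet[OF A(2) w]
        multilin_opar[OF B(1)] graded_symmetric_opar[OF B]
      by (intro Cons.IH) auto
    show ?case
      using brk_Cons_Homog[OF A(1) w len(1)] brk_Cons_Homog[OF A(1) w len(2)] right left
      by (cases "p = 0"; cases "q = 0")
        (simp_all add: sg_add sg_scale sg_sum sg_commute[of "par x" "par y"])
  qed
qed

lemma ext_br_vanishing:
  assumes "\<And>p xs. MA < p \<Longrightarrow> length xs = p \<Longrightarrow> A p xs = 0"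
    and "\<And>q xs. MB < q \<Longrightarrow> length xs = q \<Longrightarrow> B q xs = 0"
    and "MA + MB < length xs"
  shows "ext_br scale G0 G1 br A B (length xs) xs = 0"
  unfolding ext_br_def
proof (intro sum.neutral ballI)
  fix p assume "p \<in> {..length xs}"
  then consider "MA < p" | "MB < length xs - p"
    using assms(3) by fastforce
  then show "brk' p (A p) (length xs - p) (B (length xs - p)) xs = 0"
  proof cases
    case 1
    then show ?thesis
      using assms(1) \<open>p \<in> {..length xs}\<close> by (intro brk_vanishing_left) auto
  next
    case 2
    then show ?thesis
      using assms(2) \<open>p \<in> {..length xs}\<close> by (intro brk_vanishing_right) auto
  qed
qed

lemma in_S_ext_br:
  assumes A: "in_S scale G0 G1 A" and B: "in_S scale G0 G1 B"
  shows "in_S scale G0 G1 (ext_br scale G0 G1 br A B)"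
proof -
  have multilin: "multilin' p (A p)" "multilin' p (B p)"
    and sym: "graded_symmetric p (A p)" "graded_symmetric p (B p)" for p
    using A B by (auto simp: in_S_def in_U_def intro: graded_symmetric_if_symmetric_op)
  have brk_n: "multilin' n (brk' p (A p) (n - p) (B (n - p)))"
    "graded_symmetric n (brk' p (A p) (n - p) (B (n - p)))" if "p \<in> {..n}" for n p
    using multilin_brk[OF multilin(1) multilin(2)]
      graded_symmetric_brk[OF multilin(1) sym(1) multilin(2) sym(2)] that
    by (metis atMost_iff le_add_diff_inverse)+
  have "multilin' n (ext_br scale G0 G1 br A B n)" "graded_symmetric n (ext_br scale G0 G1 br A B n)" for n
    unfolding ext_br_def using brk_n by (auto intro: multilin_sum graded_symmetric_sum)
  moreover obtain MA MB where "\<And>p xs. MA < p \<Longrightarrow> length xs = p \<Longrightarrow> A p xs = 0"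
    "\<And>q xs. MB < q \<Longrightarrow> length xs = q \<Longrightarrow> B q xs = 0"
    using A B unfolding in_S_def in_U_def finite_support_iff_eventually_vanishing by blast
  then have "finite {n. \<exists>xs. length xs = n \<and> ext_br scale G0 G1 br A B n xs \<noteq> 0}"
    unfolding finite_support_iff_eventually_vanishing
    using ext_br_vanishing[of MA A MB B] by blast
  ultimately show ?thesis
    by (simp add: in_S_def in_U_def symmetric_op_if_graded_symmetric)
qed

end

lemma graded_bilinear_if_lie_superalgebra:
  "lie_superalgebra scale G0 G1 br \<Longrightarrow> graded_bilinear scale G0 G1 br"
  unfolding lie_superalgebra_def
  by (intro graded_bilinear.intro graded_space.intro graded_space_axioms.intro
      graded_bilinear_axioms.intro) simp_all

theorem proposition4p2:
  fixes scale :: "'k::field_char_0 \<Rightarrow> 'g::ab_group_add \<Rightarrow> 'g"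
    and G0 G1 :: "'g set" and br :: "'g \<Rightarrow> 'g \<Rightarrow> 'g"
    and A B :: "nat \<Rightarrow> 'g list \<Rightarrow> 'g"
  assumes "lie_superalgebra scale G0 G1 br"
    and "in_S scale G0 G1 A" and "in_S scale G0 G1 B"
  shows "in_S scale G0 G1 (ext_br scale G0 G1 br A B)"
  using graded_bilinear.in_S_ext_br[OF graded_bilinear_if_lie_superalgebra] assms by blast

end
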